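(* Let $A,B,C,O$ be members of a holey family of compact convex sets in the plane. Then $O\in conv(ABC)$ if and only if $\mathrm{hollow}(ABO)\cup\mathrm{hollow}(BCO)\cup\mathrm{hollow}(CAO)\subset \mathrm{hollow}(ABC)\cup A\cup B\cup C$.
   Context: A family of compact convex sets in the plane is holey if any two members intersect and no three distinct members have a common point. For three pairwise intersecting compact convex sets $X,Y,Z$ with no common point, $o(XYZ)=o(xyz)$ for any $x\in Y\cap Z$, $y\in X\cap Z$, $z\in X\cap Y$, where $o(xyz)=+1$ for a counterclockwise and $-1$ for a clockwise triangle (independent of the choice); and $\mathbb{R}^2\setminus(X\cup Y\cup Z)$ has exactly one bounded connected component, denoted $\mathrm{hollow}(XYZ)$. We write $O\in conv(XYZ)$ if $o(XYO)=o(YZO)=o(ZXO)=1$ or all three equal $-1$. *)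

theory Defs
  imports "HOL-Analysis.Analysis"
begin

type_synonym pt = "real^2"

definition orient :: "pt \<Rightarrow> pt \<Rightarrow> pt \<Rightarrow> int" where
  "orient x y z =
     (let d = (y$1 - x$1) * (z$2 - x$2) - (y$2 - x$2) * (z$1 - x$1)
      in if d > 0 then 1 else if d < 0 then -1 else 0)"

definition holey :: "pt set set \<Rightarrow> bool" where
  "holey F \<longleftrightarrow>
     (\<forall>X\<in>F. compact X \<and> convex X) \<and>
     (\<forall>X\<in>F. \<forall>Y\<in>F. X \<inter> Y \<noteq> {}) \<and>
     (\<forall>X\<in>F. \<forall>Y\<in>F. \<forall>Z\<in>F. X \<noteq> Y \<and> Y \<noteq> Z \<and> X \<noteq> Z \<longrightarrow> X \<inter> Y \<inter> Z = {})"

text \<open>o(XYZ) = o(xyz) for x in Y\<inter>Z, y in X\<inter>Z, z in X\<inter>Y (independent of choice per the paper).\<close>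
definition orientS :: "pt set \<Rightarrow> pt set \<Rightarrow> pt set \<Rightarrow> int" where
  "orientS X Y Z = orient (SOME x. x \<in> Y \<inter> Z) (SOME y. y \<in> X \<inter> Z) (SOME z. z \<in> X \<inter> Y)"

definition hollow :: "pt set \<Rightarrow> pt set \<Rightarrow> pt set \<Rightarrow> pt set" where
  "hollow X Y Z = (THE H. H \<in> components (- (X \<union> Y \<union> Z)) \<and> bounded H)"

definition in_conv :: "pt set \<Rightarrow> pt set \<Rightarrow> pt set \<Rightarrow> pt set \<Rightarrow> bool" where
  "in_conv O' X Y Z \<longleftrightarrow>
     (orientS X Y O' = 1 \<and> orientS Y Z O' = 1 \<and> orientS Z X O' = 1) \<or>
     (orientS X Y O' = -1 \<and> orientS Y Z O' = -1 \<and> orientS Z X O' = -1)"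

end

theory Submission
  imports Defs
begin

text \<open>
  For members X, Y, Z of a holey family and points x \<in> Y \<inter> Z, y \<in> X \<inter> Z, z \<in> X \<inter> Y, the
  hollow of X, Y, Z is the open triangle xyz minus X \<union> Y \<union> Z: a point outside the triangle
  escapes to infinity along a ray avoiding the three sets, while the part inside is connected
  (segments from x to the side zy cut it into intervals over an interval of parameters) and
  non-empty (a KKM-type argument).  Hence membership in a hollow is decided by triangles of
  intersection points.  Seen from a point q outside four members, the six intersection points
  give six directions, those of each member lying in an open half-plane, and a finite analysis
  of their circular order shows: (i) a point of hollow(XYZ) outside W lies in one of the other
  three hollows of X, Y, Z, W; (ii) two hollows sharing two members and a point have the same
  orientation.  If O \<in> conv(ABC), then (ii) rules out the hollows through O in (i), so every
  point of hollow(ABO) outside C lies in hollow(ABC).  Conversely, hollow(ABO) contains a point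
  outside C, which the inclusion puts into hollow(ABC), and (ii) gives o(ABO) = o(ABC).
\<close>

section \<open>Signed area and open triangles\<close>

definition orient_det :: "pt \<Rightarrow> pt \<Rightarrow> pt \<Rightarrow> real" where
  "orient_det a b c = (b$1 - a$1) * (c$2 - a$2) - (b$2 - a$2) * (c$1 - a$1)"

lemma orient_eq:
  "orient a b c = (if orient_det a b c > 0 then 1 else if orient_det a b c < 0 then -1 else 0)"
  unfolding orient_def orient_det_def Let_def by simp

lemma orient_det_cycle: "orient_det b c a = orient_det a b c"
  unfolding orient_det_def by algebra

lemma orient_det_swap: "orient_det b a c = - orient_det a b c"
  unfolding orient_det_def by algebra

lemma orient_det_sum: "orient_det q a b + orient_det q b c + orient_det q c a = orient_det a b c"
  unfolding orient_det_def by algebra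

lemma orient_det_affine:
  assumes "a + b + c = 1"
  shows "orient_det u v (a *\<^sub>R x + b *\<^sub>R y + c *\<^sub>R z) =
         a * orient_det u v x + b * orient_det u v y + c * orient_det u v z"
proof -
  have c: "c = 1 - a - b" using assms by simp
  show ?thesis unfolding c orient_det_def by (simp add: algebra_simps)
qed

lemma vec2_eq_iff: "(u::pt) = v \<longleftrightarrow> u$1 = v$1 \<and> u$2 = v$2"
  by (auto simp: vec_eq_iff forall_2)

lemma barycentric_coordinates:
  assumes "orient_det a b c \<noteq> 0"
  shows "q = (orient_det b c q / orient_det a b c) *\<^sub>R a + (orient_det c a q / orient_det a b c) *\<^sub>R b
             + (orient_det a b q / orient_det a b c) *\<^sub>R c"
    and "orient_det b c q / orient_det a b c + orient_det c a q / orient_det a b c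
             + orient_det a b q / orient_det a b c = 1"
proof -
  have "orient_det a b c *\<^sub>R q =
        orient_det b c q *\<^sub>R a + orient_det c a q *\<^sub>R b + orient_det a b q *\<^sub>R c"
    unfolding vec2_eq_iff orient_det_def by (simp; algebra)
  moreover have "q = (1 / orient_det a b c) *\<^sub>R (orient_det a b c *\<^sub>R q)"
    using assms by simp
  ultimately have "q = (1 / orient_det a b c) *\<^sub>R
      (orient_det b c q *\<^sub>R a + orient_det c a q *\<^sub>R b + orient_det a b q *\<^sub>R c)"
    by simp
  then show "q = (orient_det b c q / orient_det a b c) *\<^sub>R a + (orient_det c a q / orient_det a b c) *\<^sub>R b
             + (orient_det a b q / orient_det a b c) *\<^sub>R c"
    by (simp only: scaleR_add_right scaleR_scaleR) simp
  have "orient_det b c q + orient_det c a q + orient_det a b q = orient_det a b c"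
    unfolding orient_det_def by algebra
  then show "orient_det b c q / orient_det a b c + orient_det c a q / orient_det a b c
               + orient_det a b q / orient_det a b c = 1"
    using assms by (simp add: add_divide_distrib[symmetric])
qed

lemma collinear_if_orient_det_eq_0:
  assumes "orient_det a b c = 0"
  shows "collinear {a, b, c}"
proof -
  define u v where "u = b - a" and "v = c - a"
  have det: "u$1 * v$2 = u$2 * v$1"
    using assms unfolding orient_det_def u_def v_def by simp
  have "v = (v$1 / u$1) *\<^sub>R u" if "u$1 \<noteq> 0"
    using that det unfolding vec2_eq_iff by (simp add: field_simps)
  moreover have "v = (v$2 / u$2) *\<^sub>R u" if "u$2 \<noteq> 0"
    using that det unfolding vec2_eq_iff by (simp add: field_simps)
  ultimately have "collinear {0, u, v}"
    unfolding collinear_lemma by (metis vec2_eq_iff zero_index)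
  then have "collinear {b, a, c}"
    unfolding u_def v_def by (subst collinear_3) simp
  then show ?thesis by (simp add: insert_commute)
qed

definition in_triangle :: "pt \<Rightarrow> pt \<Rightarrow> pt \<Rightarrow> pt \<Rightarrow> bool" where
  "in_triangle q a b c \<longleftrightarrow>
     0 < orient_det a b q * orient_det a b c \<and> 0 < orient_det b c q * orient_det a b c \<and>
     0 < orient_det c a q * orient_det a b c"

lemma in_triangle_iff:
  "in_triangle q a b c \<longleftrightarrow>
     (orient_det q a b > 0 \<and> orient_det q b c > 0 \<and> orient_det q c a > 0) \<or>
     (orient_det q a b < 0 \<and> orient_det q b c < 0 \<and> orient_det q c a < 0)"
proof -
  show ?thesis
    unfolding in_triangle_def zero_less_mult_iff orient_det_cycle[of _ _ q] orient_det_sum[of q a b c, symmetric]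
    by linarith
qed

lemma in_triangle_barycentric_iff:
  "in_triangle q a b c \<longleftrightarrow>
     0 < orient_det b c q / orient_det a b c \<and> 0 < orient_det c a q / orient_det a b c \<and>
     0 < orient_det a b q / orient_det a b c"
  unfolding in_triangle_def zero_less_divide_iff zero_less_mult_iff by auto

lemma in_triangle_nondegenerate: "in_triangle q a b c \<Longrightarrow> orient_det a b c \<noteq> 0"
  unfolding in_triangle_def by auto

lemma in_triangle_of_barycentric:
  assumes "orient_det x y z \<noteq> 0" "0 < a" "0 < b" "0 < c" "a + b + c = 1"
  shows "in_triangle (a *\<^sub>R x + b *\<^sub>R y + c *\<^sub>R z) x y z"
proof -
  let ?q = "a *\<^sub>R x + b *\<^sub>R y + c *\<^sub>R z"
  have z: "orient_det u v u = 0" "orient_det u v v = 0" for u v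
    unfolding orient_det_def by simp_all
  have xy: "orient_det x y ?q = c * orient_det x y z"
    using orient_det_affine[OF assms(5)] z by simp
  have yz: "orient_det y z ?q = a * orient_det x y z"
    using orient_det_affine[OF assms(5), of y z] z orient_det_cycle[of y z x] by simp
  have zx: "orient_det z x ?q = b * orient_det x y z"
    using orient_det_affine[OF assms(5), of z x] z orient_det_cycle[of z x y] orient_det_cycle[of y z x]
    by simp
  have "0 < orient_det x y z * orient_det x y z"
    using assms(1) not_real_square_gt_zero by metis
  then show ?thesis
    unfolding in_triangle_def xy yz zx mult.assoc using assms(2-4) by (auto intro!: mult_pos_pos)
qed

lemma in_triangle_convex_hull: "in_triangle q a b c \<Longrightarrow> q \<in> convex hull {a, b, c}"
  using barycentric_coordinates[OF in_triangle_nondegenerate, of q a b c]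
  unfolding in_triangle_barycentric_iff convex_hull_3
  by (smt (verit) mem_Collect_eq)

lemma open_in_triangle: "open {q. in_triangle q a b c}"
  unfolding in_triangle_def orient_det_def
  by (intro open_Collect_conj open_Collect_less continuous_intros)

lemma in_triangle_interior: "in_triangle q a b c \<Longrightarrow> q \<in> interior (convex hull {a, b, c})"
  using interior_maximal[OF _ open_in_triangle] in_triangle_convex_hull by blast

lemma orient_in_triangle:
  assumes "in_triangle q a b c"
  shows "orient a b c = (if orient_det q a b > 0 then 1 else -1)"
  using assms unfolding in_triangle_iff orient_eq orient_det_sum[of q a b c, symmetric] by auto

lemma convex_line_between:
  fixes x d :: "'a::real_vector"
  assumes "convex S" "x + a *\<^sub>R d \<in> S" "x + b *\<^sub>R d \<in> S" "a \<le> l" "l \<le> b"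
  shows "x + l *\<^sub>R d \<in> S"
proof (cases "a = b")
  case False
  define u where "u = (l - a) / (b - a)"
  have u: "0 \<le> u" "u \<le> 1"
    using assms(4,5) False unfolding u_def by (auto simp: divide_simps)
  have "u * (b - a) = l - a"
    using False unfolding u_def by simp
  then have "l = (1 - u) * a + u * b"
    by (simp add: algebra_simps)
  then have "x + l *\<^sub>R d = (1 - u) *\<^sub>R (x + a *\<^sub>R d) + u *\<^sub>R (x + b *\<^sub>R d)"
    by (subst \<open>l = (1 - u) * a + u * b\<close>) (simp add: algebra_simps)
  then show ?thesis using convexD[OF assms(1-3)] u by simp
qed (use assms in simp)

lemma closed_segment_meets_both:
  fixes a b :: "'a::real_normed_vector"
  assumes "closed A" "closed B" "closed_segment a b \<subseteq> A \<union> B" "a \<in> A" "b \<in> B"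
  shows "\<exists>w \<in> closed_segment a b. w \<in> A \<and> w \<in> B"
proof (rule ccontr)
  assume "\<not> ?thesis"
  then have "A \<inter> B \<inter> closed_segment a b = {}" by blast
  from connected_closedD[OF connected_segment this assms(3,1,2)] show False
    using assms(4,5) by auto
qed

lemma convex_hull_3_subset_Un:
  fixes x :: "'a::euclidean_space"
  assumes "convex P" "convex Q" "x \<in> Q" "u \<in> P" "u \<in> Q" "w \<in> P" "w \<in> Q" "s \<in> P"
    and "w \<in> closed_segment x s"
  shows "convex hull {u, x, s} \<subseteq> P \<union> Q"
proof
  fix r assume "r \<in> convex hull {u, x, s}"
  then obtain r' where r': "r' \<in> convex hull {x, s}" "r \<in> closed_segment u r'"
    by (auto simp: convex_hull_insert_segments)
  then have "r' \<in> closed_segment x w \<union> closed_segment w s"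
    using Un_closed_segment[OF assms(9)] by (simp add: segment_convex_hull)
  then show "r \<in> P \<union> Q"
  proof
    assume "r' \<in> closed_segment x w"
    then have "r' \<in> Q" using closed_segment_subset[OF assms(3,7,2)] by blast
    then show ?thesis using closed_segment_subset[OF assms(5) _ assms(2)] r'(2) by blast
  next
    assume "r' \<in> closed_segment w s"
    then have "r' \<in> P" using closed_segment_subset[OF assms(6,8,1)] by blast
    then show ?thesis using closed_segment_subset[OF assms(4) _ assms(1)] r'(2) by blast
  qed
qed

lemma connected_Union_fibres:
  assumes "connected T" "\<And>t. t \<in> T \<Longrightarrow> connected (P t)" "\<And>t. t \<in> T \<Longrightarrow> P t \<noteq> {}"
    and "\<And>U. open U \<Longrightarrow> openin (top_of_set T) {t \<in> T. P t \<inter> U \<noteq> {}}"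
  shows "connected (\<Union>t\<in>T. P t)"
proof (rule connectedI)
  fix U1 U2
  assume U: "open U1" "open U2" "U1 \<inter> (\<Union>t\<in>T. P t) \<noteq> {}" "U2 \<inter> (\<Union>t\<in>T. P t) \<noteq> {}"
    "U1 \<inter> U2 \<inter> (\<Union>t\<in>T. P t) = {}" "(\<Union>t\<in>T. P t) \<subseteq> U1 \<union> U2"
  let ?T1 = "{t \<in> T. P t \<inter> U1 \<noteq> {}}" and ?T2 = "{t \<in> T. P t \<inter> U2 \<noteq> {}}"
  have "P t \<inter> U1 = {} \<or> P t \<inter> U2 = {}" if "t \<in> T" for t
  proof -
    have "U1 \<inter> U2 \<inter> P t = {}" "P t \<subseteq> U1 \<union> U2"
      using U(5,6) that by auto
    then show ?thesis
      using connectedD[OF assms(2)[OF that] U(1,2)] by (simp add: Int_commute)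
  qed
  then have "?T1 \<inter> ?T2 = {}" by auto
  moreover have "T \<subseteq> ?T1 \<union> ?T2"
  proof
    fix t assume t: "t \<in> T"
    then obtain p where "p \<in> P t" using assms(3) by blast
    then show "t \<in> ?T1 \<union> ?T2" using U(6) t by blast
  qed
  moreover have "?T1 \<noteq> {}" "?T2 \<noteq> {}" using U(3,4) by auto
  ultimately show False
    using assms(1) assms(4)[OF U(1)] assms(4)[OF U(2)] unfolding connected_openin
    by (metis (no_types, lifting))
qed

lemma bounded_ray_imp_zero:
  fixes q d :: "'a::real_normed_vector"
  assumes "bounded ((\<lambda>l. q + l *\<^sub>R d) ` {0..})"
  shows "d = 0"
proof (rule ccontr)
  assume "d \<noteq> 0"
  obtain B where B: "\<And>r. r \<in> (\<lambda>l. q + l *\<^sub>R d) ` {0..} \<Longrightarrow> norm r \<le> B"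
    using assms unfolding bounded_iff by blast
  define l where "l = (\<bar>B\<bar> + norm q + 1) / norm d"
  have "0 \<le> l" "norm (l *\<^sub>R d) = \<bar>B\<bar> + norm q + 1"
    unfolding l_def using \<open>d \<noteq> 0\<close> by auto
  moreover have "norm (q + l *\<^sub>R d) \<le> B"
    using B \<open>0 \<le> l\<close> by auto
  ultimately show False
    using norm_diff_ineq[of "l *\<^sub>R d" q] by (simp add: add.commute)
qed

lemma the_bounded_component_eq_inside:
  fixes S :: "'a::real_normed_vector set"
  assumes "connected (inside S)" "inside S \<noteq> {}"
  shows "(THE H. H \<in> components (- S) \<and> bounded H) = inside S"
proof -
  obtain h where h: "h \<in> inside S" using assms(2) by blast
  have comp: "connected_component_set (- S) h = inside S"
  proof
    have "inside S \<subseteq> - S"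
      using inside_no_overlap by blast
    then show "inside S \<subseteq> connected_component_set (- S) h"
      using connected_component_maximal[OF h assms(1)] by blast
  next
    show "connected_component_set (- S) h \<subseteq> inside S"
    proof
      fix p assume p: "p \<in> connected_component_set (- S) h"
      then have "connected_component_set (- S) p = connected_component_set (- S) h" "p \<notin> S"
        using connected_component_eq connected_component_in by blast+
      then show "p \<in> inside S" using h unfolding inside_def by simp
    qed
  qed
  show ?thesis
  proof (rule the_equality)
    show "inside S \<in> components (- S) \<and> bounded (inside S)"
      using comp h unfolding components_def inside_def by auto
  next
    fix K assume K: "K \<in> components (- S) \<and> bounded K"
    then obtain k where k: "k \<notin> S" "K = connected_component_set (- S) k"
      unfolding components_def by blast
    then have "k \<in> inside S"
      using K unfolding inside_def by auto
    then show "K = inside S"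
      using connected_component_eq[of k "- S" h] k(2) comp by simp
  qed
qed

section \<open>Fan parametrisation of a triangle\<close>

definition fan :: "pt \<Rightarrow> pt \<Rightarrow> pt \<Rightarrow> real \<Rightarrow> real \<Rightarrow> pt" where
  "fan x y z t l = x + l *\<^sub>R ((z + t *\<^sub>R (y - z)) - x)"

lemma fan_barycentric: "fan x y z t l = (1 - l) *\<^sub>R x + (l * t) *\<^sub>R y + (l * (1 - t)) *\<^sub>R z"
  unfolding fan_def by (simp add: algebra_simps)

lemma fan_0: "fan x y z t 0 = x"
  unfolding fan_def by simp

lemma fan_1: "fan x y z t 1 = z + t *\<^sub>R (y - z)"
  unfolding fan_def by simp

lemma fan_line: "fan x y z t l = x + l *\<^sub>R (fan x y z t 1 - x)"
  unfolding fan_def by simp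

lemma isCont_fan: "isCont (\<lambda>p. fan x y z (fst p) (snd p)) p0"
  unfolding fan_def by (intro continuous_intros)

lemma isCont_fan_t: "isCont (\<lambda>t. fan x y z t l) t0"
  unfolding fan_def by (intro continuous_intros)

lemma isCont_fan_l: "isCont (fan x y z t) l0"
  unfolding fan_def by (intro continuous_intros)

lemma fan_convex_between:
  "convex S \<Longrightarrow> fan x y z t a \<in> S \<Longrightarrow> fan x y z t b \<in> S \<Longrightarrow> a \<le> l \<Longrightarrow> l \<le> b \<Longrightarrow> fan x y z t l \<in> S"
  using convex_line_between[of S x a "fan x y z t 1 - x" b l] by (simp only: fan_line[symmetric])

lemma fan_1_in_segment: "0 \<le> t \<Longrightarrow> t \<le> 1 \<Longrightarrow> fan x y z t 1 \<in> closed_segment z y"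
  unfolding fan_1 closed_segment_def by (auto simp: algebra_simps intro!: exI[of _ t])

lemma closed_segment_fan: "closed_segment x (fan x y z t 1) = fan x y z t ` {0..1}"
proof -
  have "(\<lambda>u. (1 - u) *\<^sub>R x + u *\<^sub>R fan x y z t 1) = fan x y z t"
    unfolding fan_def by (rule ext) (simp add: algebra_simps)
  then show ?thesis using closed_segment_image_interval by metis
qed

lemma fan_in_triangle:
  "orient_det x y z \<noteq> 0 \<Longrightarrow> 0 < t \<Longrightarrow> t < 1 \<Longrightarrow> 0 < l \<Longrightarrow> l < 1 \<Longrightarrow> in_triangle (fan x y z t l) x y z"
  unfolding fan_barycentric by (rule in_triangle_of_barycentric) (auto simp: algebra_simps)

lemma in_triangle_imp_fan:
  assumes "in_triangle q x y z"
  obtains t l where "0 < t" "t < 1" "0 < l" "l < 1" "q = fan x y z t l"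
proof -
  define a b c where "a = orient_det y z q / orient_det x y z"
    and "b = orient_det z x q / orient_det x y z" and "c = orient_det x y q / orient_det x y z"
  have q: "q = a *\<^sub>R x + b *\<^sub>R y + c *\<^sub>R z" and s: "a + b + c = 1"
    using barycentric_coordinates[OF in_triangle_nondegenerate[OF assms]] unfolding a_def b_def c_def by auto
  have p: "a > 0" "b > 0" "c > 0"
    using assms unfolding in_triangle_barycentric_iff a_def b_def c_def by auto
  have "1 - (b + c) = a" "(b + c) * (b / (b + c)) = b" "(b + c) * (1 - b / (b + c)) = c"
    using s p by (auto simp: field_simps)
  then have "q = fan x y z (b / (b + c)) (b + c)"
    unfolding fan_barycentric q by simp
  moreover have "0 < b / (b + c)" "b / (b + c) < 1" "0 < b + c" "b + c < 1"
    using p s by (auto simp: field_simps)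
  ultimately show ?thesis using that by blast
qed

lemma fan_swap: "fan x z y (1 - t) l = fan x y z t l"
  unfolding fan_def by (simp add: algebra_simps)

lemma fan_in_convex_hull_left:
  assumes "0 \<le> t'" "t' \<le> t" "0 < t" "0 \<le> l" "l \<le> 1"
  shows "fan x y z t' l \<in> convex hull {z, x, fan x y z t 1}"
proof -
  have eq: "fan x y z t' l = (l * (1 - t' / t)) *\<^sub>R z + (1 - l) *\<^sub>R x + (l * t' / t) *\<^sub>R fan x y z t 1"
    using assms(3) unfolding fan_barycentric fan_1 by (simp add: algebra_simps vec2_eq_iff)
  have "l * t' \<le> l * t"
    using assms by (intro mult_left_mono) auto
  then have nonneg: "0 \<le> l * (1 - t' / t)" "0 \<le> l * t' / t"
    using assms by (auto simp: field_simps)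
  have sum: "l * (1 - t' / t) + (1 - l) + l * t' / t = 1"
    by (simp add: algebra_simps)
  show ?thesis
    unfolding convex_hull_3 mem_Collect_eq
    by (rule exI[of _ "l * (1 - t' / t)"], rule exI[of _ "1 - l"], rule exI[of _ "l * t' / t"])
      (intro conjI eq nonneg sum, simp add: assms(5))
qed

lemma fan_in_convex_hull_right:
  assumes "t \<le> t'" "t' \<le> 1" "t < 1" "0 \<le> l" "l \<le> 1"
  shows "fan x y z t' l \<in> convex hull {y, x, fan x y z t 1}"
  using fan_in_convex_hull_left[of "1 - t'" "1 - t" l x z y] assms by (simp add: fan_swap)

lemma closed_fan_hits:
  assumes "closed S"
  shows "closed {t \<in> {0..1}. \<exists>l\<in>{0..1}. fan x y z t l \<in> S}"
proof -
  define K where "K = ({0..1} \<times> {0..1}) \<inter> (\<lambda>p. fan x y z (fst p) (snd p)) -` S"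
  have "compact K"
    unfolding K_def
    by (intro compact_Int_closed compact_Times compact_Icc continuous_closed_vimage assms isCont_fan)
  then have "compact (fst ` K)"
    by (intro compact_continuous_image continuous_intros)
  moreover have "fst ` K = {t \<in> {0..1}. \<exists>l\<in>{0..1}. fan x y z t l \<in> S}"
    unfolding K_def by force
  ultimately show ?thesis using compact_imp_closed by metis
qed

lemma fan_boundary_covered:
  assumes "convex Y" "convex Z" "x \<in> Y" "x \<in> Z" "z \<in> Y" "y \<in> Z" "closed_segment z y \<subseteq> P"
    and "0 \<le> t" "t \<le> 1" "0 \<le> l" "l \<le> 1" "\<not> (0 < t \<and> t < 1 \<and> 0 < l \<and> l < 1)"
  shows "fan x y z t l \<in> P \<union> Y \<union> Z"
proof -
  consider "t = 0" | "t = 1" | "l = 0" | "l = 1" using assms(8-12) by linarith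
  then show ?thesis
  proof cases
    case 1
    then have "fan x y z t l \<in> Y"
      using fan_convex_between[OF assms(1), of x y z 0 0 1 l] assms(3,5,10,11) by (simp add: fan_0 fan_1)
    then show ?thesis by blast
  next
    case 2
    then have "fan x y z t l \<in> Z"
      using fan_convex_between[OF assms(2), of x y z 1 0 1 l] assms(4,6,10,11) by (simp add: fan_0 fan_1)
    then show ?thesis by blast
  next
    case 3
    then show ?thesis using assms(3) by (simp add: fan_0)
  next
    case 4
    then show ?thesis using fan_1_in_segment[OF assms(8,9), of x y z] assms(7) by auto
  qed
qed

lemma fan_not_in_both:
  assumes "convex Y" "convex Z" "x \<in> Y" "x \<in> Z" "Y \<inter> Z \<inter> P = {}" "0 \<le> l1" "0 \<le> l2"
    and "fan x y z t l1 \<in> P \<inter> Y"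
  shows "fan x y z t l2 \<notin> P \<inter> Z"
proof
  assume l2: "fan x y z t l2 \<in> P \<inter> Z"
  have x0: "fan x y z t 0 \<in> Y \<inter> Z" using assms(3,4) by (simp add: fan_0)
  show False
  proof (cases "l1 \<le> l2")
    case True
    then have "fan x y z t l1 \<in> Z"
      using fan_convex_between[OF assms(2), of x y z t 0 l2 l1] x0 l2 assms(6) by auto
    then show False using assms(5,8) by blast
  next
    case False
    then have "fan x y z t l2 \<in> Y"
      using fan_convex_between[OF assms(1), of x y z t 0 l1 l2] x0 assms(7,8) by auto
    then show False using assms(5) l2 by blast
  qed
qed

text \<open>A KKM-type argument: sweeping the side zy, the segments from x must switch from meeting
  P \<inter> Y to meeting P \<inter> Z, which would produce a point in all three sets.\<close>

lemma fan_not_covered: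
  assumes "closed P" "closed Y" "closed Z" "convex Y" "convex Z"
    and x: "x \<in> Y" "x \<in> Z" and "z \<in> Y" "y \<in> Z"
    and side: "closed_segment z y \<subseteq> P" and disjoint: "Y \<inter> Z \<inter> P = {}"
  obtains t l where "0 < t" "t < 1" "0 < l" "l < 1" "fan x y z t l \<notin> P \<union> Y \<union> Z"
proof -
  have "\<exists>t l. 0 < t \<and> t < 1 \<and> 0 < l \<and> l < 1 \<and> fan x y z t l \<notin> P \<union> Y \<union> Z"
  proof (rule ccontr)
    assume none: "\<not> ?thesis"
    have covered: "fan x y z t l \<in> P \<union> Y \<union> Z" if "0 \<le> t" "t \<le> 1" "0 \<le> l" "l \<le> 1" for t l
    proof (cases "0 < t \<and> t < 1 \<and> 0 < l \<and> l < 1")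
      case True
      then show ?thesis using none by blast
    next
      case False
      then show ?thesis
        by (rule fan_boundary_covered[OF assms(4,5) x \<open>z \<in> Y\<close> \<open>y \<in> Z\<close> side that])
    qed
    define D where "D = {t \<in> {0..1}. \<exists>l\<in>{0..1}. fan x y z t l \<in> P \<inter> Y}"
    define E where "E = {t \<in> {0..1}. \<exists>l\<in>{0..1}. fan x y z t l \<in> P \<inter> Z}"
    have "closed D" "closed E"
      unfolding D_def E_def by (intro closed_fan_hits closed_Int assms(1-3))+
    have "{0..1} \<subseteq> D \<union> E"
    proof
      fix t :: real assume t: "t \<in> {0..1}"
      have "closed_segment x (fan x y z t 1) \<subseteq> (Y \<union> Z) \<union> P"
        unfolding closed_segment_fan
      proof (rule image_subsetI)
        fix l :: real assume "l \<in> {0..1}"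
        then show "fan x y z t l \<in> (Y \<union> Z) \<union> P" using covered[of t l] t by auto
      qed
      moreover have "fan x y z t 1 \<in> P" using fan_1_in_segment[of t x y z] t side by auto
      moreover have "closed (Y \<union> Z)" "x \<in> Y \<union> Z" using assms(2,3) x by auto
      ultimately obtain w where "w \<in> closed_segment x (fan x y z t 1)" "w \<in> Y \<union> Z" "w \<in> P"
        using closed_segment_meets_both[of "Y \<union> Z" P] assms(1) by blast
      then show "t \<in> D \<union> E" unfolding D_def E_def closed_segment_fan using t by auto
    qed
    moreover have "D \<inter> E = {}"
    proof (rule ccontr)
      assume "D \<inter> E \<noteq> {}"
      then obtain t l1 l2 where "l1 \<in> {0..1}" "fan x y z t l1 \<in> P \<inter> Y"
        and "l2 \<in> {0..1}" "fan x y z t l2 \<in> P \<inter> Z"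
        unfolding D_def E_def by blast
      then show False using fan_not_in_both[OF assms(4,5) x disjoint, of l1 l2] by auto
    qed
    moreover have "0 \<in> D" "1 \<in> E"
      using side \<open>z \<in> Y\<close> \<open>y \<in> Z\<close> unfolding D_def E_def by (auto simp: fan_1 intro!: bexI[of _ 1])
    ultimately have "D \<inter> {0..1} = {} \<or> E \<inter> {0..1} = {}"
      using connected_closedD[OF connected_Icc _ _ \<open>closed D\<close> \<open>closed E\<close>, of 0 1] by blast
    then show False using \<open>0 \<in> D\<close> \<open>1 \<in> E\<close> by auto
  qed
  then show ?thesis using that by blast
qed

section \<open>The hollow of three convex sets\<close>

lemma line_through_vertex:
  fixes x y z q :: pt
  assumes "q = a *\<^sub>R x + b *\<^sub>R y + c *\<^sub>R z" "a + b + c = 1" "b + c \<noteq> 0"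
  shows "x + (1 / (b + c)) *\<^sub>R (q - x) = (b / (b + c)) *\<^sub>R y + (c / (b + c)) *\<^sub>R z"
proof -
  define k where "k = b + c"
  have k0: "k \<noteq> 0" and bk: "b = k - c" and a: "a = 1 - b - c"
    using assms(2,3) unfolding k_def by auto
  have "x$i + 1 / k * (q$i - x$i) = b / k * y$i + c / k * z$i" for i
  proof -
    have "q$i = a * x$i + b * y$i + c * z$i"
      using assms(1) by simp
    then have "q$i - x$i = b * (y$i - x$i) + c * (z$i - x$i)"
      unfolding a by (simp add: algebra_simps)
    then show ?thesis using k0 unfolding bk by (simp add: field_simps)
  qed
  then show ?thesis unfolding vec2_eq_iff k_def[symmetric] by simp
qed

locale convex_triple =
  fixes X Y Z :: "pt set" and x y z :: pt
  assumes convex: "convex X" "convex Y" "convex Z"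
    and closed: "closed X" "closed Y" "closed Z"
    and no_common_point: "X \<inter> Y \<inter> Z = {}"
    and vertices: "x \<in> Y" "x \<in> Z" "y \<in> X" "y \<in> Z" "z \<in> X" "z \<in> Y"
begin

lemma rotate: "convex_triple Y Z X y z x"
  using convex closed no_common_point vertices by unfold_locales auto

lemma orient_det_nonzero: "orient_det x y z \<noteq> 0"
proof
  assume "orient_det x y z = 0"
  then have "x \<in> closed_segment y z \<or> y \<in> closed_segment z x \<or> z \<in> closed_segment x y"
    using collinear_if_orient_det_eq_0 collinear_between_cases between_mem_segment by blast
  then show False
    using closed_segment_subset[OF vertices(3,5) convex(1)] closed_segment_subset[OF vertices(6,1) convex(2)]
      closed_segment_subset[OF vertices(2,4) convex(3)] vertices no_common_point by blast
qed

text \<open>The line from x through q meets the side yz in a point of X; according to the signs of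
  the barycentric coordinates, either q or x lies between that point and the ray beyond q.\<close>

lemma ray_escapes_from_vertex:
  assumes q: "q = a *\<^sub>R x + b *\<^sub>R y + c *\<^sub>R z" "a + b + c = 1" "q \<notin> X \<union> Y \<union> Z"
    and signs: "(a < 0 \<and> 0 \<le> b \<and> 0 \<le> c) \<or> (b \<le> 0 \<and> c \<le> 0)" and "0 \<le> l"
  shows "q + l *\<^sub>R (q - x) \<notin> X \<union> Y \<union> Z"
proof -
  define L where "L s = x + s *\<^sub>R (q - x)" for s
  have L: "L 0 = x" "L 1 = q" "L (1 + l) = q + l *\<^sub>R (q - x)"
    unfolding L_def by (simp_all add: algebra_simps)
  have "x \<notin> X" using vertices no_common_point by blast
  have a: "a = 1 - b - c" using q(2) by simp
  have bc: "0 < b + c \<and> 0 \<le> b \<and> 0 \<le> c \<or> b + c < 0 \<and> b \<le> 0 \<and> c \<le> 0"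
  proof -
    have "b + c \<noteq> 0"
    proof
      assume "b + c = 0"
      then have "b = 0" "c = 0" using signs a by linarith+
      then have "q = x" using q(1) a by simp
      then show False using q(3) vertices by blast
    qed
    then show ?thesis using signs a by linarith
  qed
  define k where "k = b + c"
  have "L (1 / k) = (b / k) *\<^sub>R y + (c / k) *\<^sub>R z"
    unfolding L_def k_def using line_through_vertex[OF q(1,2)] bc by auto
  moreover have "0 \<le> b / k" "0 \<le> c / k" "b / k + c / k = 1"
    using bc unfolding k_def by (auto simp: zero_le_divide_iff add_divide_distrib[symmetric])
  ultimately have p: "L (1 / k) \<in> X"
    using convexD[OF convex(1) vertices(3,5)] by simp
  have "q + l *\<^sub>R (q - x) \<notin> S" if "convex S" "x \<in> S" "q \<notin> S" for S
    using convex_line_between[OF that(1), of x 0 "q - x" "1 + l" 1] L that \<open>0 \<le> l\<close>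
    unfolding L_def by auto
  then have "q + l *\<^sub>R (q - x) \<notin> Y" "q + l *\<^sub>R (q - x) \<notin> Z"
    using convex vertices q(3) by auto
  moreover have "q + l *\<^sub>R (q - x) \<notin> X"
  proof
    assume w: "q + l *\<^sub>R (q - x) \<in> X"
    from bc show False
    proof
      assume "0 < b + c \<and> 0 \<le> b \<and> 0 \<le> c"
      then have "1 \<le> k" using signs a unfolding k_def by linarith
      then have "1 / k \<le> 1" by simp
      then have "L 1 \<in> X"
        using convex_line_between[OF convex(1), of x "1 / k" "q - x" "1 + l" 1] p w L \<open>0 \<le> l\<close>
        unfolding L_def by auto
      then show False using L q(3) by auto
    next
      assume "b + c < 0 \<and> b \<le> 0 \<and> c \<le> 0"
      then have "1 / k \<le> 0" unfolding k_def by simp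
      then have "L 0 \<in> X"
        using convex_line_between[OF convex(1), of x "1 / k" "q - x" "1 + l" 0] p w L \<open>0 \<le> l\<close>
        unfolding L_def by auto
      then show False using L \<open>x \<notin> X\<close> by auto
    qed
  qed
  ultimately show ?thesis by blast
qed

lemma escape_ray:
  assumes "q \<notin> X \<union> Y \<union> Z" "\<not> in_triangle q x y z"
  obtains d where "d \<noteq> 0" "\<And>l. 0 \<le> l \<Longrightarrow> q + l *\<^sub>R d \<notin> X \<union> Y \<union> Z"
proof -
  define a b c where "a = orient_det y z q / orient_det x y z"
    and "b = orient_det z x q / orient_det x y z" and "c = orient_det x y q / orient_det x y z"
  have q: "q = a *\<^sub>R x + b *\<^sub>R y + c *\<^sub>R z" and s: "a + b + c = 1"
    using barycentric_coordinates[OF orient_det_nonzero] unfolding a_def b_def c_def by auto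
  have "\<not> (0 < a \<and> 0 < b \<and> 0 < c)"
    using assms(2) unfolding in_triangle_barycentric_iff a_def b_def c_def by auto
  moreover have "\<not> (a = 0 \<and> 0 \<le> b \<and> 0 \<le> c)"
  proof
    assume "a = 0 \<and> 0 \<le> b \<and> 0 \<le> c"
    then have "q \<in> X" using q s convexD[OF convex(1) vertices(3,5), of b c] by simp
    then show False using assms(1) by blast
  qed
  moreover have "\<not> (b = 0 \<and> 0 \<le> c \<and> 0 \<le> a)"
  proof
    assume "b = 0 \<and> 0 \<le> c \<and> 0 \<le> a"
    then have "q \<in> Y" using q s convexD[OF convex(2) vertices(6,1), of c a] by (simp add: add.commute)
    then show False using assms(1) by blast
  qed
  moreover have "\<not> (c = 0 \<and> 0 \<le> a \<and> 0 \<le> b)"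
  proof
    assume "c = 0 \<and> 0 \<le> a \<and> 0 \<le> b"
    then have "q \<in> Z" using q s convexD[OF convex(3) vertices(2,4), of a b] by simp
    then show False using assms(1) by blast
  qed
  ultimately consider "(a < 0 \<and> 0 \<le> b \<and> 0 \<le> c) \<or> (b \<le> 0 \<and> c \<le> 0)"
    | "(b < 0 \<and> 0 \<le> c \<and> 0 \<le> a) \<or> (c \<le> 0 \<and> a \<le> 0)"
    | "(c < 0 \<and> 0 \<le> a \<and> 0 \<le> b) \<or> (a \<le> 0 \<and> b \<le> 0)"
    by linarith
  then show ?thesis
  proof cases
    case 1
    show ?thesis
    proof (rule that)
      show "q - x \<noteq> 0" using assms(1) vertices by auto
      show "q + l *\<^sub>R (q - x) \<notin> X \<union> Y \<union> Z" if "0 \<le> l" for l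
        by (rule ray_escapes_from_vertex[OF q s assms(1) 1 that])
    qed
  next
    case 2
    have V: "Y \<union> Z \<union> X = X \<union> Y \<union> Z" by blast
    have "q = b *\<^sub>R y + c *\<^sub>R z + a *\<^sub>R x" "b + c + a = 1" "q \<notin> Y \<union> Z \<union> X"
      using q s assms(1) by (auto simp: algebra_simps)
    note ray = convex_triple.ray_escapes_from_vertex[OF rotate this 2, unfolded V]
    show ?thesis
    proof (rule that)
      show "q - y \<noteq> 0" using assms(1) vertices by auto
      show "q + l *\<^sub>R (q - y) \<notin> X \<union> Y \<union> Z" if "0 \<le> l" for l
        by (rule ray[OF that])
    qed
  next
    case 3
    have V: "Z \<union> X \<union> Y = X \<union> Y \<union> Z" by blast
    have "q = c *\<^sub>R z + a *\<^sub>R x + b *\<^sub>R y" "c + a + b = 1" "q \<notin> Z \<union> X \<union> Y"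
      using q s assms(1) by (auto simp: algebra_simps)
    note ray = convex_triple.ray_escapes_from_vertex[OF convex_triple.rotate[OF rotate] this 3, unfolded V]
    show ?thesis
    proof (rule that)
      show "q - z \<noteq> 0" using assms(1) vertices by auto
      show "q + l *\<^sub>R (q - z) \<notin> X \<union> Y \<union> Z" if "0 \<le> l" for l
        by (rule ray[OF that])
    qed
  qed
qed

lemma inside_eq: "inside (X \<union> Y \<union> Z) = {q. in_triangle q x y z} - (X \<union> Y \<union> Z)"
proof
  show "{q. in_triangle q x y z} - (X \<union> Y \<union> Z) \<subseteq> inside (X \<union> Y \<union> Z)"
  proof
    fix q assume q: "q \<in> {q. in_triangle q x y z} - (X \<union> Y \<union> Z)"
    then have "q \<in> inside (closed_segment x y \<union> closed_segment y z \<union> closed_segment z x)"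
      using in_triangle_interior inside_of_triangle[of x y z] by simp
    moreover have "closed_segment x y \<union> closed_segment y z \<union> closed_segment z x \<subseteq> X \<union> Y \<union> Z"
      using closed_segment_subset[OF vertices(2,4) convex(3)] closed_segment_subset[OF vertices(3,5) convex(1)]
        closed_segment_subset[OF vertices(6,1) convex(2)] by blast
    ultimately show "q \<in> inside (X \<union> Y \<union> Z)" using inside_mono q by blast
  qed
  show "inside (X \<union> Y \<union> Z) \<subseteq> {q. in_triangle q x y z} - (X \<union> Y \<union> Z)"
  proof
    fix q assume q: "q \<in> inside (X \<union> Y \<union> Z)"
    then have qV: "q \<notin> X \<union> Y \<union> Z" and bd: "bounded (connected_component_set (- (X \<union> Y \<union> Z)) q)"
      unfolding inside_def by auto
    have "in_triangle q x y z"
    proof (rule ccontr)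
      assume "\<not> in_triangle q x y z"
      then obtain d where d: "d \<noteq> 0" "\<And>l. 0 \<le> l \<Longrightarrow> q + l *\<^sub>R d \<notin> X \<union> Y \<union> Z"
        using escape_ray qV by blast
      define R where "R = (\<lambda>l. q + l *\<^sub>R d) ` {0..}"
      have "connected R"
        unfolding R_def by (intro connected_continuous_image continuous_intros convex_connected convex_real_interval)
      moreover have "R \<subseteq> - (X \<union> Y \<union> Z)" "q \<in> R"
        unfolding R_def using d(2) by (auto intro!: image_eqI[of _ _ 0])
      ultimately have "bounded R"
        using connected_component_maximal bd bounded_subset by metis
      then show False
        using bounded_ray_imp_zero d(1) unfolding R_def by blast
    qed
    then show "q \<in> {q. in_triangle q x y z} - (X \<union> Y \<union> Z)" using qV by simp
  qed
qed

definition fibre :: "real \<Rightarrow> real set" where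
  "fibre t = {l. 0 < l \<and> l < 1 \<and> fan x y z t l \<notin> X \<union> Y \<union> Z}"

lemma fan_side_in_X: "0 \<le> t \<Longrightarrow> t \<le> 1 \<Longrightarrow> fan x y z t 1 \<in> X"
  using fan_1_in_segment closed_segment_subset[OF vertices(5,3) convex(1)] by blast

lemma is_interval_fibre:
  assumes "0 \<le> t" "t \<le> 1"
  shows "is_interval (fibre t)"
  unfolding is_interval_1
proof (intro ballI allI impI)
  fix l1 l2 l assume l1: "l1 \<in> fibre t" and l2: "l2 \<in> fibre t" and l: "l1 \<le> l \<and> l \<le> l2"
  have x: "fan x y z t 0 \<in> Y \<inter> Z" using vertices by (simp add: fan_0)
  have "fan x y z t l \<notin> S" if "convex S" "fan x y z t 0 \<in> S" "fan x y z t l1 \<notin> S" for S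
    using fan_convex_between[OF that(1,2), of l l1] l1 l that(3) unfolding fibre_def by auto
  then have "fan x y z t l \<notin> Y" "fan x y z t l \<notin> Z"
    using convex x l1 unfolding fibre_def by auto
  moreover have "fan x y z t l \<notin> X"
    using fan_convex_between[OF convex(1) _ fan_side_in_X[OF assms], of l l2] l2 l
    unfolding fibre_def by auto
  ultimately show "l \<in> fibre t"
    using l1 l2 l unfolding fibre_def by auto
qed

lemma empty_fibre_one_side:
  assumes t: "0 < t" "t < 1" and empty: "fibre t = {}"
  shows "(\<forall>t'. 0 \<le> t' \<and> t' \<le> t \<longrightarrow> fibre t' = {}) \<or> (\<forall>t'. t \<le> t' \<and> t' \<le> 1 \<longrightarrow> fibre t' = {})"
proof -
  define s where "s = fan x y z t 1"
  have sX: "s \<in> X" unfolding s_def using fan_side_in_X t by simp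
  have "closed_segment x s \<subseteq> X \<union> (Y \<union> Z)"
    unfolding s_def closed_segment_fan
  proof (rule image_subsetI)
    fix l :: real assume "l \<in> {0..1}"
    then consider "l = 0" | "l = 1" | "0 < l \<and> l < 1" by fastforce
    then show "fan x y z t l \<in> X \<union> (Y \<union> Z)"
      by cases (use vertices fan_side_in_X t empty in \<open>auto simp: fan_0 fibre_def\<close>)
  qed
  then obtain w where w: "w \<in> closed_segment x s" "w \<in> Y \<union> Z" "w \<in> X"
    using closed_segment_meets_both[of "Y \<union> Z" X x s] closed vertices sX by blast
  then consider "w \<in> Y" | "w \<in> Z" by blast
  then show ?thesis
  proof cases
    case 1
    have "convex hull {z, x, s} \<subseteq> X \<union> Y"
      by (rule convex_hull_3_subset_Un[OF convex(1,2) vertices(1,5,6) w(3) 1 sX w(1)])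
    moreover have "fan x y z t' l \<in> convex hull {z, x, s}" if "0 \<le> t'" "t' \<le> t" "0 < l" "l < 1" for t' l
      using fan_in_convex_hull_left[of t' t l x y z] t that unfolding s_def by auto
    ultimately show ?thesis
      unfolding fibre_def by blast
  next
    case 2
    have "convex hull {y, x, s} \<subseteq> X \<union> Z"
      by (rule convex_hull_3_subset_Un[OF convex(1,3) vertices(2,3,4) w(3) 2 sX w(1)])
    moreover have "fan x y z t' l \<in> convex hull {y, x, s}" if "t \<le> t'" "t' \<le> 1" "0 < l" "l < 1" for t' l
      using fan_in_convex_hull_right[of t t' l x y z] t that unfolding s_def by auto
    ultimately show ?thesis
      unfolding fibre_def by blast
  qed
qed

lemma is_interval_nonempty_fibres: "is_interval {t. 0 < t \<and> t < 1 \<and> fibre t \<noteq> {}}"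
  unfolding is_interval_1
proof (intro ballI allI impI CollectI conjI)
  fix t1 t2 t
  assume t1: "t1 \<in> {t. 0 < t \<and> t < 1 \<and> fibre t \<noteq> {}}" and t2: "t2 \<in> {t. 0 < t \<and> t < 1 \<and> fibre t \<noteq> {}}"
    and t: "t1 \<le> t \<and> t \<le> t2"
  show t01: "0 < t" "t < 1" using t1 t2 t by auto
  show "fibre t \<noteq> {}"
  proof
    assume "fibre t = {}"
    from empty_fibre_one_side[OF t01 this] show False
    proof
      assume "\<forall>t'. 0 \<le> t' \<and> t' \<le> t \<longrightarrow> fibre t' = {}"
      then show False using t1 t by auto
    next
      assume "\<forall>t'. t \<le> t' \<and> t' \<le> 1 \<longrightarrow> fibre t' = {}"
      then show False using t2 t by auto
    qed
  qed
qed

lemma hollow_region_eq_fibres: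
  "{q. in_triangle q x y z} - (X \<union> Y \<union> Z) = (\<Union>t\<in>{t. 0 < t \<and> t < 1 \<and> fibre t \<noteq> {}}. fan x y z t ` fibre t)"
proof
  show "{q. in_triangle q x y z} - (X \<union> Y \<union> Z) \<subseteq> (\<Union>t\<in>{t. 0 < t \<and> t < 1 \<and> fibre t \<noteq> {}}. fan x y z t ` fibre t)"
  proof
    fix q assume "q \<in> {q. in_triangle q x y z} - (X \<union> Y \<union> Z)"
    moreover obtain t l where "0 < t" "t < 1" "0 < l" "l < 1" "q = fan x y z t l"
      using calculation in_triangle_imp_fan by blast
    ultimately show "q \<in> (\<Union>t\<in>{t. 0 < t \<and> t < 1 \<and> fibre t \<noteq> {}}. fan x y z t ` fibre t)"
      unfolding fibre_def by blast
  qed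
  show "(\<Union>t\<in>{t. 0 < t \<and> t < 1 \<and> fibre t \<noteq> {}}. fan x y z t ` fibre t) \<subseteq> {q. in_triangle q x y z} - (X \<union> Y \<union> Z)"
    using fan_in_triangle[OF orient_det_nonzero] unfolding fibre_def by auto
qed

lemma hollow_region_connected: "connected ({q. in_triangle q x y z} - (X \<union> Y \<union> Z))"
  unfolding hollow_region_eq_fibres
proof (rule connected_Union_fibres)
  let ?T = "{t. 0 < t \<and> t < 1 \<and> fibre t \<noteq> {}}"
  show "connected ?T"
    using is_interval_nonempty_fibres is_interval_connected by blast
  show "connected (fan x y z t ` fibre t)" if "t \<in> ?T" for t
    using that is_interval_fibre[of t] isCont_fan_l
    by (intro connected_continuous_image continuous_at_imp_continuous_on is_interval_connected) auto
  show "fan x y z t ` fibre t \<noteq> {}" if "t \<in> ?T" for t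
    using that by simp
  show "openin (top_of_set ?T) {t \<in> ?T. fan x y z t ` fibre t \<inter> U \<noteq> {}}" if "open U" for U
  proof -
    define W where "W = (\<Union>l\<in>{0<..<1}. (\<lambda>t. fan x y z t l) -` (U - (X \<union> Y \<union> Z)))"
    have "open W"
      unfolding W_def using closed \<open>open U\<close>
      by (intro open_UN ballI continuous_open_vimage open_Diff closed_Un isCont_fan_t) auto
    moreover have "{t \<in> ?T. fan x y z t ` fibre t \<inter> U \<noteq> {}} = ?T \<inter> W"
    proof (intro equalityI subsetI)
      fix t assume t: "t \<in> {t \<in> ?T. fan x y z t ` fibre t \<inter> U \<noteq> {}}"
      then obtain l where "l \<in> fibre t" "fan x y z t l \<in> U" by blast
      then show "t \<in> ?T \<inter> W" using t unfolding W_def fibre_def by auto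
    next
      fix t assume t: "t \<in> ?T \<inter> W"
      then obtain l where "l \<in> {0<..<1}" "fan x y z t l \<in> U - (X \<union> Y \<union> Z)"
        unfolding W_def by blast
      then have "l \<in> fibre t" "fan x y z t l \<in> U" unfolding fibre_def by auto
      then show "t \<in> {t \<in> ?T. fan x y z t ` fibre t \<inter> U \<noteq> {}}" using t by blast
    qed
    ultimately show ?thesis by (simp add: openin_open_Int)
  qed
qed

lemma hollow_region_nonempty: "{q. in_triangle q x y z} - (X \<union> Y \<union> Z) \<noteq> {}"
proof -
  have "closed_segment z y \<subseteq> X" using closed_segment_subset[OF vertices(5,3) convex(1)] .
  moreover have "Y \<inter> Z \<inter> X = {}" using no_common_point by blast
  ultimately obtain t l where "0 < t" "t < 1" "0 < l" "l < 1" "fan x y z t l \<notin> X \<union> Y \<union> Z"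
    using fan_not_covered[OF closed convex(2,3) vertices(1,2,6,4)] by blast
  then show ?thesis using fan_in_triangle[OF orient_det_nonzero] by blast
qed

lemma hollow_eq: "hollow X Y Z = {q. in_triangle q x y z} - (X \<union> Y \<union> Z)"
  unfolding hollow_def
  using the_bounded_component_eq_inside[of "X \<union> Y \<union> Z"] hollow_region_connected hollow_region_nonempty
  unfolding inside_eq by simp

end

section \<open>Directions seen from a point\<close>

text \<open>Seen from q, the direction of a - q is coded by the side of the line through q with slope t
  on which a lies and by the cotangent of the angle between a - q and that line.  Orientations,
  and containment of q in a triangle, become order conditions on these codes, which the
  combinatorial lemmas below settle by case analysis.\<close>

definition chart_side :: "pt \<Rightarrow> real \<Rightarrow> pt \<Rightarrow> real" where
  "chart_side q t a = (a$2 - q$2) - t * (a$1 - q$1)"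

definition chart_coord :: "pt \<Rightarrow> real \<Rightarrow> pt \<Rightarrow> real" where
  "chart_coord q t a = ((a$1 - q$1) + t * (a$2 - q$2)) / chart_side q t a"

definition ccw_code :: "bool \<Rightarrow> bool \<Rightarrow> real \<Rightarrow> real \<Rightarrow> bool" where
  "ccw_code s s' k k' = (if s = s' then k' < k else k < k')"

definition surround_code :: "bool \<Rightarrow> bool \<Rightarrow> bool \<Rightarrow> real \<Rightarrow> real \<Rightarrow> real \<Rightarrow> bool" where
  "surround_code s1 s2 s3 k1 k2 k3 \<longleftrightarrow>
     (ccw_code s1 s2 k1 k2 \<and> ccw_code s2 s3 k2 k3 \<and> ccw_code s3 s1 k3 k1) \<or>
     (ccw_code s2 s1 k2 k1 \<and> ccw_code s3 s2 k3 k2 \<and> ccw_code s1 s3 k1 k3)"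

definition half_plane_code :: "bool \<Rightarrow> bool \<Rightarrow> bool \<Rightarrow> real \<Rightarrow> real \<Rightarrow> real \<Rightarrow> bool" where
  "half_plane_code s1 s2 s3 k1 k2 k3 \<longleftrightarrow>
     \<not> surround_code s1 s2 s3 k1 k2 k3 \<and>
     (k1 = k2 \<longrightarrow> s1 = s2) \<and> (k2 = k3 \<longrightarrow> s2 = s3) \<and> (k1 = k3 \<longrightarrow> s1 = s3)"

lemma surround_code_exchange:
  assumes "surround_code s3 s2 s1 k3 k2 k1"
    and "half_plane_code s1 s2 s4 k1 k2 k4" "half_plane_code s1 s3 s5 k1 k3 k5"
    and "half_plane_code s2 s3 s6 k2 k3 k6" "half_plane_code s4 s5 s6 k4 k5 k6"
  shows "surround_code s5 s4 s1 k5 k4 k1 \<or> surround_code s6 s4 s2 k6 k4 k2 \<or> surround_code s6 s5 s3 k6 k5 k3"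
  using assms unfolding half_plane_code_def surround_code_def ccw_code_def by smt

lemma surround_code_common_edge:
  assumes "surround_code s3 s2 s1 k3 k2 k1" "surround_code s5 s4 s1 k5 k4 k1"
    and "half_plane_code s1 s2 s4 k1 k2 k4" "half_plane_code s1 s3 s5 k1 k3 k5"
    and "k2 = k3 \<longrightarrow> s2 = s3" "k4 = k5 \<longrightarrow> s4 = s5"
  shows "ccw_code s3 s2 k3 k2 \<longleftrightarrow> ccw_code s5 s4 k5 k4"
  using assms unfolding half_plane_code_def surround_code_def ccw_code_def by smt

lemma chart_orient_det:
  assumes "chart_side q t a \<noteq> 0" "chart_side q t b \<noteq> 0"
  shows "(1 + t * t) * orient_det q a b =
         chart_side q t a * chart_side q t b * (chart_coord q t a - chart_coord q t b)"
proof -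
  have "chart_side q t a * chart_side q t b * (chart_coord q t a - chart_coord q t b) =
      ((a$1 - q$1) + t * (a$2 - q$2)) * chart_side q t b - ((b$1 - q$1) + t * (b$2 - q$2)) * chart_side q t a"
    unfolding chart_coord_def using assms by (simp add: field_simps)
  also have "\<dots> = (1 + t * t) * orient_det q a b"
    unfolding chart_side_def orient_det_def by (simp add: algebra_simps)
  finally show ?thesis by simp
qed

lemma orient_det_pos_iff_ccw_code:
  assumes "chart_side q t a \<noteq> 0" "chart_side q t b \<noteq> 0"
  shows "orient_det q a b > 0 \<longleftrightarrow>
         ccw_code (chart_side q t a > 0) (chart_side q t b > 0) (chart_coord q t a) (chart_coord q t b)"
proof -
  have "1 + t * t > 0" by (simp add: add_pos_nonneg)
  then have "orient_det q a b > 0 \<longleftrightarrow> (1 + t * t) * orient_det q a b > 0"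
    by (simp add: zero_less_mult_iff)
  also have "\<dots> \<longleftrightarrow> ccw_code (chart_side q t a > 0) (chart_side q t b > 0) (chart_coord q t a) (chart_coord q t b)"
    unfolding chart_orient_det[OF assms] ccw_code_def using assms
    by (auto simp: zero_less_mult_iff mult_less_0_iff)
  finally show ?thesis .
qed

lemma in_triangle_iff_surround_code:
  assumes "chart_side q t a \<noteq> 0" "chart_side q t b \<noteq> 0" "chart_side q t c \<noteq> 0"
  shows "in_triangle q a b c \<longleftrightarrow>
    surround_code (chart_side q t a > 0) (chart_side q t b > 0) (chart_side q t c > 0)
      (chart_coord q t a) (chart_coord q t b) (chart_coord q t c)"
proof -
  have neg: "orient_det q u v < 0 \<longleftrightarrow> orient_det q v u > 0" for u v
    using orient_det_swap[of a] unfolding orient_det_def by (auto simp: algebra_simps)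
  show ?thesis
    unfolding in_triangle_iff surround_code_def neg
      orient_det_pos_iff_ccw_code[OF assms(1,2)] orient_det_pos_iff_ccw_code[OF assms(2,3)]
      orient_det_pos_iff_ccw_code[OF assms(3,1)] orient_det_pos_iff_ccw_code[OF assms(2,1)]
      orient_det_pos_iff_ccw_code[OF assms(3,2)] orient_det_pos_iff_ccw_code[OF assms(1,3)]
    by auto
qed

lemma chart_side_eq_if_coord_eq:
  assumes "q \<notin> closed_segment a b" "chart_side q t a \<noteq> 0" "chart_side q t b \<noteq> 0"
    and "chart_coord q t a = chart_coord q t b"
  shows "chart_side q t a > 0 \<longleftrightarrow> chart_side q t b > 0"
proof (rule ccontr)
  let ?ha = "chart_side q t a" and ?hb = "chart_side q t b"
  assume opposite: "\<not> ?thesis"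
  have det: "orient_det q a b = 0"
    using chart_orient_det[OF assms(2,3)] assms(4) by (simp add: add_nonneg_eq_0_iff)
  define m where "m = ?hb / (?hb - ?ha)"
  have "?hb - ?ha \<noteq> 0" using opposite by auto
  have m: "0 \<le> m" "m \<le> 1"
    using opposite assms(2,3) unfolding m_def by (auto simp: divide_simps split: if_splits)
  have "q$i = (1 - m) * b$i + m * a$i" for i :: 2
  proof -
    have "?hb * (a$1 - q$1) - ?ha * (b$1 - q$1) = orient_det q a b"
      "?hb * (a$2 - q$2) - ?ha * (b$2 - q$2) = t * orient_det q a b"
      unfolding chart_side_def orient_det_def by (simp_all add: algebra_simps)
    then have "?hb * (a$i - q$i) - ?ha * (b$i - q$i) = 0" using det exhaust_2[of i] by auto
    moreover have "(1 - m) * b$i + m * a$i - q$i = (?hb * (a$i - q$i) - ?ha * (b$i - q$i)) / (?hb - ?ha)"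
      unfolding m_def using \<open>?hb - ?ha \<noteq> 0\<close> by (simp add: divide_simps) (simp add: algebra_simps)
    ultimately show ?thesis by simp
  qed
  then have "q = (1 - m) *\<^sub>R b + m *\<^sub>R a"
    unfolding vec2_eq_iff by simp
  then have "q \<in> closed_segment b a"
    using m unfolding closed_segment_def by blast
  then show False using assms(1) by (simp add: closed_segment_commute)
qed

lemma half_plane_code_if_not_in_hull:
  assumes "q \<notin> convex hull {a, b, c}"
    and "chart_side q t a \<noteq> 0" "chart_side q t b \<noteq> 0" "chart_side q t c \<noteq> 0"
  shows "half_plane_code (chart_side q t a > 0) (chart_side q t b > 0) (chart_side q t c > 0)
           (chart_coord q t a) (chart_coord q t b) (chart_coord q t c)"
proof -
  have "\<not> in_triangle q a b c" using assms(1) in_triangle_convex_hull by blast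
  moreover have "q \<notin> closed_segment u v" if "{u, v} \<subseteq> {a, b, c}" for u v
    using assms(1) hull_mono[OF that, of convex] unfolding segment_convex_hull by blast
  ultimately show ?thesis
    unfolding half_plane_code_def in_triangle_iff_surround_code[OF assms(2-4), symmetric]
    using chart_side_eq_if_coord_eq[of q a b] chart_side_eq_if_coord_eq[of q b c]
      chart_side_eq_if_coord_eq[of q a c] assms(2-4) by auto
qed

lemma exists_chart_slope:
  assumes "finite A" "q \<notin> A"
  obtains t where "\<And>a. a \<in> A \<Longrightarrow> chart_side q t a \<noteq> 0"
proof -
  obtain t where t: "t \<notin> (\<lambda>a. (a$2 - q$2) / (a$1 - q$1)) ` A"
    using ex_new_if_finite[OF infinite_UNIV_char_0] assms(1) by blast
  have "chart_side q t a \<noteq> 0" if a: "a \<in> A" for a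
  proof
    assume h: "chart_side q t a = 0"
    show False
    proof (cases "a$1 = q$1")
      case True
      then have "a = q" using h unfolding chart_side_def vec2_eq_iff by simp
      then show False using a assms(2) by simp
    next
      case False
      then have "t = (a$2 - q$2) / (a$1 - q$1)" using h unfolding chart_side_def by (simp add: field_simps)
      then show False using t a by auto
    qed
  qed
  then show ?thesis using that by blast
qed

lemma in_triangle_exchange:
  assumes X: "q \<notin> convex hull {xy, xz, xw}" and Y: "q \<notin> convex hull {xy, yz, yw}"
    and Z: "q \<notin> convex hull {xz, yz, zw}" and W: "q \<notin> convex hull {xw, yw, zw}"
    and "in_triangle q yz xz xy"
  shows "in_triangle q yw xw xy \<or> in_triangle q zw xw xz \<or> in_triangle q zw yw yz"
proof -
  have "q \<notin> {xy, xz, yz, xw, yw, zw}"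
    using X Y Z W hull_inc by (metis insert_iff empty_iff)
  then obtain t where "\<And>a. a \<in> {xy, xz, yz, xw, yw, zw} \<Longrightarrow> chart_side q t a \<noteq> 0"
    using exists_chart_slope[of "{xy, xz, yz, xw, yw, zw}" q] by blast
  then have n: "chart_side q t xy \<noteq> 0" "chart_side q t xz \<noteq> 0" "chart_side q t yz \<noteq> 0"
    "chart_side q t xw \<noteq> 0" "chart_side q t yw \<noteq> 0" "chart_side q t zw \<noteq> 0"
    by auto
  show ?thesis
    unfolding in_triangle_iff_surround_code[OF n(5,4,1)] in_triangle_iff_surround_code[OF n(6,4,2)]
      in_triangle_iff_surround_code[OF n(6,5,3)]
    by (rule surround_code_exchange[OF assms(5)[unfolded in_triangle_iff_surround_code[OF n(3,2,1)]]
      half_plane_code_if_not_in_hull[OF X n(1,2,4)] half_plane_code_if_not_in_hull[OF Y n(1,3,5)]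
      half_plane_code_if_not_in_hull[OF Z n(2,3,6)] half_plane_code_if_not_in_hull[OF W n(4,5,6)]])
qed

lemma in_triangle_common_edge:
  assumes X: "q \<notin> convex hull {xy, xz, xw}" and Y: "q \<notin> convex hull {xy, yz, yw}"
    and Z: "q \<notin> closed_segment xz yz" and W: "q \<notin> closed_segment xw yw"
    and Z_tri: "in_triangle q yz xz xy" and W_tri: "in_triangle q yw xw xy"
  shows "orient yz xz xy = orient yw xw xy"
proof -
  have "q \<notin> {xy, xz, yz, xw, yw}"
    using X Y hull_inc by (metis insert_iff empty_iff)
  then obtain t where "\<And>a. a \<in> {xy, xz, yz, xw, yw} \<Longrightarrow> chart_side q t a \<noteq> 0"
    using exists_chart_slope[of "{xy, xz, yz, xw, yw}" q] by blast
  then have n: "chart_side q t xy \<noteq> 0" "chart_side q t xz \<noteq> 0" "chart_side q t yz \<noteq> 0"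
    "chart_side q t xw \<noteq> 0" "chart_side q t yw \<noteq> 0"
    by auto
  have "orient_det q yz xz > 0 \<longleftrightarrow> orient_det q yw xw > 0"
    unfolding orient_det_pos_iff_ccw_code[OF n(3,2)] orient_det_pos_iff_ccw_code[OF n(5,4)]
    by (rule surround_code_common_edge[OF Z_tri[unfolded in_triangle_iff_surround_code[OF n(3,2,1)]]
      W_tri[unfolded in_triangle_iff_surround_code[OF n(5,4,1)]]
      half_plane_code_if_not_in_hull[OF X n(1,2,4)] half_plane_code_if_not_in_hull[OF Y n(1,3,5)]])
      (use chart_side_eq_if_coord_eq[OF Z n(2,3)] chart_side_eq_if_coord_eq[OF W n(4,5)] in auto)
  then show ?thesis
    unfolding orient_in_triangle[OF Z_tri] orient_in_triangle[OF W_tri] by simp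
qed

section \<open>Holey families\<close>

abbreviation pick :: "pt set \<Rightarrow> pt" where
  "pick S \<equiv> SOME p. p \<in> S"

lemma hollow_cycle: "hollow Y Z X = hollow X Y Z"
  unfolding hollow_def by (simp add: Un_ac)

lemma hollow_swap: "hollow Y X Z = hollow X Y Z"
  unfolding hollow_def by (simp add: Un_ac)

lemma orient_cycle: "orient b c a = orient a b c"
  unfolding orient_eq orient_det_cycle[of b c a] ..

lemma orient_swap: "orient a c b = - orient a b c"
proof -
  have "orient_det a c b = - orient_det a b c"
    unfolding orient_det_def by algebra
  then show ?thesis unfolding orient_eq by auto
qed

lemma orientS_cycle: "orientS Y Z X = orientS X Y Z"
  unfolding orientS_def Int_commute[of Z X] Int_commute[of Y X] by (rule orient_cycle)

lemma orientS_swap: "orientS X Z Y = - orientS X Y Z"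
  unfolding orientS_def Int_commute[of Z Y] by (rule orient_swap)

lemma in_conv_iff_orientS_eq:
  assumes "orientS A B O' = 1 \<or> orientS A B O' = -1" "orientS B C O' = 1 \<or> orientS B C O' = -1"
    and "orientS C A O' = 1 \<or> orientS C A O' = -1"
  shows "in_conv O' A B C \<longleftrightarrow> orientS A B O' = orientS B C O' \<and> orientS B C O' = orientS C A O'"
  unfolding in_conv_def using assms by auto

locale holey_family =
  fixes F :: "pt set set"
  assumes holey: "holey F"
begin

lemma convex_member: "X \<in> F \<Longrightarrow> convex X"
  and closed_member: "X \<in> F \<Longrightarrow> closed X"
  using conjunct1[OF holey[unfolded holey_def]] compact_imp_closed by auto

lemma members_meet: "X \<in> F \<Longrightarrow> Y \<in> F \<Longrightarrow> X \<inter> Y \<noteq> {}"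
  using conjunct1[OF conjunct2[OF holey[unfolded holey_def]]] by blast

lemma no_triple_point:
  assumes "X \<in> F" "Y \<in> F" "Z \<in> F" "distinct [X, Y, Z]"
  shows "X \<inter> Y \<inter> Z = {}"
  using conjunct2[OF conjunct2[OF holey[unfolded holey_def]]] assms by auto

lemma pick_Int: "X \<in> F \<Longrightarrow> Y \<in> F \<Longrightarrow> pick (X \<inter> Y) \<in> X \<inter> Y"
  using members_meet some_in_eq by metis

lemma convex_triple:
  assumes "X \<in> F" "Y \<in> F" "Z \<in> F" "distinct [X, Y, Z]"
  shows "convex_triple X Y Z (pick (Y \<inter> Z)) (pick (X \<inter> Z)) (pick (X \<inter> Y))"
  using convex_member[OF assms(1)] convex_member[OF assms(2)] convex_member[OF assms(3)]
    closed_member[OF assms(1)] closed_member[OF assms(2)] closed_member[OF assms(3)]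
    no_triple_point[OF assms] pick_Int[OF assms(2,3)] pick_Int[OF assms(1,3)] pick_Int[OF assms(1,2)]
  by unfold_locales blast+

lemma hollow_eq_triangle:
  assumes "X \<in> F" "Y \<in> F" "Z \<in> F" "distinct [X, Y, Z]"
  shows "hollow X Y Z =
         {q. in_triangle q (pick (Y \<inter> Z)) (pick (X \<inter> Z)) (pick (X \<inter> Y))} - (X \<union> Y \<union> Z)"
  using convex_triple.hollow_eq[OF convex_triple[OF assms]] .

lemma orientS_cases:
  assumes "X \<in> F" "Y \<in> F" "Z \<in> F" "distinct [X, Y, Z]"
  shows "orientS X Y Z = 1 \<or> orientS X Y Z = -1"
  using convex_triple.orient_det_nonzero[OF convex_triple[OF assms]]
  unfolding orientS_def orient_eq by auto

lemma not_in_hull_of_member: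
  "S \<in> F \<Longrightarrow> q \<notin> S \<Longrightarrow> a \<in> S \<Longrightarrow> b \<in> S \<Longrightarrow> c \<in> S \<Longrightarrow> q \<notin> convex hull {a, b, c}"
  using hull_minimal[of "{a, b, c}" S convex] convex_member by auto

lemma hollow_exchange:
  assumes F: "X \<in> F" "Y \<in> F" "Z \<in> F" "W \<in> F" and d: "distinct [X, Y, Z, W]"
    and q: "q \<in> hollow X Y Z" "q \<notin> W"
  shows "q \<in> hollow X Y W \<or> q \<in> hollow X Z W \<or> q \<in> hollow Y Z W"
proof -
  have d3: "distinct [X, Y, Z]" "distinct [X, Y, W]" "distinct [X, Z, W]" "distinct [Y, Z, W]"
    using d by auto
  have q_tri: "in_triangle q (pick (Y \<inter> Z)) (pick (X \<inter> Z)) (pick (X \<inter> Y))"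
    and q_out: "q \<notin> X" "q \<notin> Y" "q \<notin> Z"
    using q(1) unfolding hollow_eq_triangle[OF F(1-3) d3(1)] by auto
  note p = pick_Int[OF F(1,2)] pick_Int[OF F(1,3)] pick_Int[OF F(1,4)]
    pick_Int[OF F(2,3)] pick_Int[OF F(2,4)] pick_Int[OF F(3,4)]
  have "in_triangle q (pick (Y \<inter> W)) (pick (X \<inter> W)) (pick (X \<inter> Y)) \<or>
      in_triangle q (pick (Z \<inter> W)) (pick (X \<inter> W)) (pick (X \<inter> Z)) \<or>
      in_triangle q (pick (Z \<inter> W)) (pick (Y \<inter> W)) (pick (Y \<inter> Z))"
  proof (rule in_triangle_exchange[OF _ _ _ _ q_tri])
    show "q \<notin> convex hull {pick (X \<inter> Y), pick (X \<inter> Z), pick (X \<inter> W)}"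
      using not_in_hull_of_member[OF F(1) q_out(1)] p by blast
    show "q \<notin> convex hull {pick (X \<inter> Y), pick (Y \<inter> Z), pick (Y \<inter> W)}"
      using not_in_hull_of_member[OF F(2) q_out(2)] p by blast
    show "q \<notin> convex hull {pick (X \<inter> Z), pick (Y \<inter> Z), pick (Z \<inter> W)}"
      using not_in_hull_of_member[OF F(3) q_out(3)] p by blast
    show "q \<notin> convex hull {pick (X \<inter> W), pick (Y \<inter> W), pick (Z \<inter> W)}"
      using not_in_hull_of_member[OF F(4) q(2)] p by blast
  qed
  then show ?thesis
    unfolding hollow_eq_triangle[OF F(1,2,4) d3(2)] hollow_eq_triangle[OF F(1,3,4) d3(3)]
      hollow_eq_triangle[OF F(2,3,4) d3(4)]
    using q_out q(2) by blast
qed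

lemma orientS_eq_if_common_hollow_point:
  assumes F: "X \<in> F" "Y \<in> F" "Z \<in> F" "W \<in> F" and d: "distinct [X, Y, Z, W]"
    and q: "q \<in> hollow X Y Z" "q \<in> hollow X Y W"
  shows "orientS X Y Z = orientS X Y W"
proof -
  have d3: "distinct [X, Y, Z]" "distinct [X, Y, W]" using d by auto
  have Z_tri: "in_triangle q (pick (Y \<inter> Z)) (pick (X \<inter> Z)) (pick (X \<inter> Y))"
    and W_tri: "in_triangle q (pick (Y \<inter> W)) (pick (X \<inter> W)) (pick (X \<inter> Y))"
    and q_out: "q \<notin> X" "q \<notin> Y" "q \<notin> Z" "q \<notin> W"
    using q unfolding hollow_eq_triangle[OF F(1-3) d3(1)] hollow_eq_triangle[OF F(1,2,4) d3(2)] by auto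
  note p = pick_Int[OF F(1,2)] pick_Int[OF F(1,3)] pick_Int[OF F(1,4)]
    pick_Int[OF F(2,3)] pick_Int[OF F(2,4)]
  have "q \<notin> closed_segment a b" if "S \<in> F" "q \<notin> S" "a \<in> S" "b \<in> S" for S a b
    using closed_segment_subset[OF that(3,4) convex_member[OF that(1)]] that(2) by auto
  then show ?thesis
    unfolding orientS_def
  proof (intro in_triangle_common_edge[OF _ _ _ _ Z_tri W_tri])
    show "q \<notin> convex hull {pick (X \<inter> Y), pick (X \<inter> Z), pick (X \<inter> W)}"
      using not_in_hull_of_member[OF F(1) q_out(1)] p by blast
    show "q \<notin> convex hull {pick (X \<inter> Y), pick (Y \<inter> Z), pick (Y \<inter> W)}"
      using not_in_hull_of_member[OF F(2) q_out(2)] p by blast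
  qed (use F q_out p in blast)+
qed

lemma hollow_point_outside:
  assumes F: "X \<in> F" "Y \<in> F" "Z \<in> F" "W \<in> F" and d: "distinct [X, Y, Z, W]"
  obtains q where "q \<in> hollow X Y W" "q \<notin> Z"
proof -
  let ?x = "pick (Y \<inter> W)" and ?y = "pick (X \<inter> W)" and ?z = "pick (X \<inter> Y)"
  have d': "distinct [X, Y, W]" "distinct [Y, W, Z]" using d by auto
  have T: "convex_triple X Y W ?x ?y ?z"
    by (rule convex_triple[OF F(1,2,4) d'(1)])
  note vertices = convex_triple.vertices[OF T]
  have side: "closed_segment ?z ?y \<subseteq> X \<union> Z"
    using closed_segment_subset[OF vertices(5,3) convex_member[OF F(1)]] by blast
  have disjoint: "Y \<inter> W \<inter> (X \<union> Z) = {}"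
    using no_triple_point[OF F(1,2,4) d'(1)] no_triple_point[OF F(2,4,3) d'(2)] by blast
  have closed: "closed (X \<union> Z)"
    using closed_member[OF F(1)] closed_member[OF F(3)] by (rule closed_Un)
  obtain t l where "0 < t" "t < 1" "0 < l" "l < 1"
    and out: "fan ?x ?y ?z t l \<notin> (X \<union> Z) \<union> Y \<union> W"
    by (rule fan_not_covered[OF closed closed_member[OF F(2)] closed_member[OF F(4)]
        convex_member[OF F(2)] convex_member[OF F(4)] vertices(1,2,6,4) side disjoint])
  then have "in_triangle (fan ?x ?y ?z t l) ?x ?y ?z"
    by (intro fan_in_triangle[OF convex_triple.orient_det_nonzero[OF T]])
  then have "fan ?x ?y ?z t l \<in> hollow X Y W"
    unfolding convex_triple.hollow_eq[OF T] using out by simp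
  then show ?thesis using out that by simp
qed

lemma hollow_subset_if_orientS_eq:
  assumes F: "X \<in> F" "Y \<in> F" "Z \<in> F" "W \<in> F" and d: "distinct [X, Y, Z, W]"
    and o: "orientS X Y W = orientS Y Z W" "orientS Y Z W = orientS Z X W"
  shows "hollow X Y W \<subseteq> hollow X Y Z \<union> X \<union> Y \<union> Z"
proof
  fix q assume q: "q \<in> hollow X Y W"
  have d': "distinct [X, Y, W]" "distinct [X, W, Y, Z]" "distinct [Y, W, X, Z]" "distinct [X, Y, W, Z]"
    using d by auto
  have "orientS X Y W \<noteq> 0" using orientS_cases[OF F(1,2,4) d'(1)] by auto
  have "q \<notin> hollow X W Z"
  proof
    assume "q \<in> hollow X W Z"
    moreover have "q \<in> hollow X W Y"
      using q hollow_swap[of X W Y] hollow_cycle[of X Y W] by simp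
    ultimately have "orientS X W Y = orientS X W Z"
      using orientS_eq_if_common_hollow_point[OF F(1,4,2,3) d'(2)] by blast
    then show False
      using o \<open>orientS X Y W \<noteq> 0\<close> orientS_swap[of X Y W] orientS_cycle[of X W Z] by linarith
  qed
  moreover have "q \<notin> hollow Y W Z"
  proof
    assume "q \<in> hollow Y W Z"
    moreover have "q \<in> hollow Y W X"
      using q hollow_cycle[of Y W X] by simp
    ultimately have "orientS Y W X = orientS Y W Z"
      using orientS_eq_if_common_hollow_point[OF F(2,4,1,3) d'(3)] by blast
    then show False
      using o \<open>orientS X Y W \<noteq> 0\<close> orientS_swap[of Y Z W] orientS_cycle[of Y W X] by linarith
  qed
  moreover have "q \<in> hollow X Y Z \<or> q \<in> hollow X W Z \<or> q \<in> hollow Y W Z" if "q \<notin> Z"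
    using hollow_exchange[OF F(1,2,4,3) d'(4) q that] .
  ultimately show "q \<in> hollow X Y Z \<union> X \<union> Y \<union> Z" by blast
qed

lemma orientS_eq_if_hollow_subset:
  assumes F: "X \<in> F" "Y \<in> F" "Z \<in> F" "W \<in> F" and d: "distinct [X, Y, Z, W]"
    and "hollow X Y W \<subseteq> hollow X Y Z \<union> X \<union> Y \<union> Z"
  shows "orientS X Y W = orientS X Y Z"
proof -
  have d': "distinct [X, Y, W]" "distinct [X, Y, Z, W]" using d by auto
  obtain q where q: "q \<in> hollow X Y W" "q \<notin> Z"
    using hollow_point_outside[OF F d] .
  moreover have "q \<notin> X" "q \<notin> Y"
    using q(1) unfolding hollow_eq_triangle[OF F(1,2,4) d'(1)] by auto
  ultimately have "q \<in> hollow X Y Z" using assms(6) by blast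
  from orientS_eq_if_common_hollow_point[OF F d this q(1)] show ?thesis by simp
qed

lemma hollows_subset_if_orientS_eq:
  assumes F: "A \<in> F" "B \<in> F" "C \<in> F" "W \<in> F" and "distinct [A, B, C, W]"
    and o: "orientS A B W = orientS B C W" "orientS B C W = orientS C A W"
  shows "hollow A B W \<union> hollow B C W \<union> hollow C A W \<subseteq> hollow A B C \<union> A \<union> B \<union> C"
proof -
  have d: "distinct [B, C, A, W]" "distinct [C, A, B, W]" using assms(5) by auto
  have o': "orientS C A W = orientS A B W" using o by simp
  have "hollow A B W \<subseteq> hollow A B C \<union> A \<union> B \<union> C"
    using hollow_subset_if_orientS_eq[OF F assms(5) o] .
  moreover have "hollow B C W \<subseteq> hollow B C A \<union> B \<union> C \<union> A"
    using hollow_subset_if_orientS_eq[OF F(2,3,1,4) d(1) o(2) o'] .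
  moreover have "hollow C A W \<subseteq> hollow C A B \<union> C \<union> A \<union> B"
    using hollow_subset_if_orientS_eq[OF F(3,1,2,4) d(2) o' o(1)] .
  ultimately show ?thesis
    unfolding hollow_cycle[of A B C] hollow_cycle[of B C A] by blast
qed

lemma orientS_eq_if_hollows_subset:
  assumes F: "A \<in> F" "B \<in> F" "C \<in> F" "W \<in> F" and "distinct [A, B, C, W]"
    and sub: "hollow A B W \<union> hollow B C W \<union> hollow C A W \<subseteq> hollow A B C \<union> A \<union> B \<union> C"
  shows "orientS A B W = orientS A B C" "orientS B C W = orientS A B C" "orientS C A W = orientS A B C"
proof -
  have d: "distinct [B, C, A, W]" "distinct [C, A, B, W]" using assms(5) by auto
  have "hollow A B W \<subseteq> hollow A B C \<union> A \<union> B \<union> C"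
    "hollow B C W \<subseteq> hollow B C A \<union> B \<union> C \<union> A" "hollow C A W \<subseteq> hollow C A B \<union> C \<union> A \<union> B"
    using sub unfolding hollow_cycle[of A B C] hollow_cycle[of B C A] by blast+
  from orientS_eq_if_hollow_subset[OF F assms(5) this(1)]
    orientS_eq_if_hollow_subset[OF F(2,3,1,4) d(1) this(2)]
    orientS_eq_if_hollow_subset[OF F(3,1,2,4) d(2) this(3)]
  show "orientS A B W = orientS A B C" "orientS B C W = orientS A B C" "orientS C A W = orientS A B C"
    unfolding orientS_cycle[of A B C] orientS_cycle[of B C A] by simp_all
qed

end

theorem mainTheorem7:
  fixes F :: "pt set set" and A B C O' :: "pt set"
  assumes "holey F"
    and "A \<in> F" "B \<in> F" "C \<in> F" "O' \<in> F"
    and "distinct [A, B, C, O']"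
  shows "in_conv O' A B C \<longleftrightarrow>
         hollow A B O' \<union> hollow B C O' \<union> hollow C A O' \<subseteq> hollow A B C \<union> A \<union> B \<union> C"
proof -
  interpret holey_family F by (rule holey_family.intro) (rule assms(1))
  have "distinct [A, B, O']" "distinct [B, C, O']" "distinct [C, A, O']"
    using assms(6) by auto
  note conv = in_conv_iff_orientS_eq[OF orientS_cases[OF assms(2,3,5) this(1)]
    orientS_cases[OF assms(3,4,5) this(2)] orientS_cases[OF assms(4,2,5) this(3)]]
  show ?thesis
  proof
    assume "in_conv O' A B C"
    then show "hollow A B O' \<union> hollow B C O' \<union> hollow C A O' \<subseteq> hollow A B C \<union> A \<union> B \<union> C"
      unfolding conv by (intro hollows_subset_if_orientS_eq[OF assms(2-6)]) simp_all
  next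
    assume "hollow A B O' \<union> hollow B C O' \<union> hollow C A O' \<subseteq> hollow A B C \<union> A \<union> B \<union> C"
    from orientS_eq_if_hollows_subset[OF assms(2-6) this] show "in_conv O' A B C"
      unfolding conv by simp
  qed
qed

end
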